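(* For any complex number $a\in\mathbb{C}$, the spectral density function of $z-a\in\mathbb{C}[\mathbb{Z}]=\mathbb{C}[z,z^{-1}]$ satisfies \[ F\bigl(r_{z-a}^{(2)}\bigr)(\lambda)\le\frac{8\sqrt3}{\sqrt{47}}\cdot\lambda\quad\text{for all }\lambda\in[0,\infty). \]
   Context: For $q\in\mathbb{C}[z,z^{-1}]$, $r_q^{(2)}\colon L^2(\mathbb{Z})\to L^2(\mathbb{Z})$ is multiplication by $q$, and its spectral density function is $F(r_q^{(2)})(\lambda)=\mu_{S^1}\bigl(\{z\in S^1: |q(z)|\le\lambda\}\bigr)$ with $\mu_{S^1}$ the normalized Haar measure on the unit circle. *)

theory Defs
  imports "HOL-Analysis.Analysis"
begin

definition circle_haar :: "complex measure" where
  "circle_haar = distr (restrict_space lborel {0..1::real}) borel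
                       (\<lambda>t. cis (2 * pi * t))"

text \<open>Spectral density function of r_q^(2) (multiplication by q on L^2(Z)),
where q is given by its evaluation function on the circle.\<close>
definition spectral_density :: "(complex \<Rightarrow> complex) \<Rightarrow> real \<Rightarrow> real" where
  "spectral_density q lam = measure circle_haar {z \<in> space circle_haar. cmod (q z) \<le> lam}"

end

theory Submission
  imports Defs
begin

text \<open>The set of points of the unit circle where \<open>|z - a| \<le> \<lambda>\<close> is an arc whose points are
  pairwise at chord distance at most \<open>2\<lambda>\<close>. By Jordan's inequality
  \<open>sin x \<ge> 2x/\<pi>\<close> on \<open>[0, \<pi>/2]\<close>, chord distance \<open>2\<lambda>\<close> corresponds to a difference of
  angle parameters (in \<open>[0,1]\<close>) of at most \<open>\<lambda>/2\<close> modulo 1, so the arc has normalized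
  measure at most \<open>2\<lambda>\<close>. This is sharper than the stated bound, since
  \<open>2 \<le> 8\<surd>3/\<surd>47 \<approx> 2.02\<close>.\<close>

lemma concave_on_sin: "concave_on {0..pi} sin"
  by (rule f''_le0_imp_concave[where f' = cos and f'' = "\<lambda>x. - sin x"])
     (auto intro!: derivative_eq_intros sin_ge_zero)

lemma Jordan_inequality:
  fixes x :: real
  assumes "0 \<le> x" "x \<le> pi / 2"
  shows "2 * x / pi \<le> sin x"
proof -
  have "concave_on {0..pi/2} sin"
    using concave_on_sin unfolding concave_on_def by (rule convex_on_subset) auto
  then have "(sin (pi/2) - sin 0) / (pi/2 - 0) * (x - 0) + sin 0 \<le> sin x"
    using assms by (intro concave_onD_Icc') auto
  then show ?thesis by simp
qed

lemma sin_pi_ge_tent: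
  fixes u :: real
  assumes "0 \<le> u" "u \<le> 1"
  shows "2 * min u (1 - u) \<le> sin (pi * u)"
proof (cases "u \<le> 1/2")
  case True
  then show ?thesis using Jordan_inequality[of "pi * u"] assms by simp
next
  case False
  have "sin (pi * u) = sin (pi * (1 - u))"
    by (simp add: right_diff_distrib)
  then show ?thesis using Jordan_inequality[of "pi * (1 - u)"] assms False by simp
qed

lemma abs_sin_pi_le_imp_near_0_or_1:
  fixes s lam :: real
  assumes "\<bar>s\<bar> \<le> 1" "\<bar>sin (pi * s)\<bar> \<le> lam"
  shows "\<bar>s\<bar> \<le> lam / 2 \<or> 1 - lam / 2 \<le> \<bar>s\<bar>"
proof -
  have "\<bar>sin (pi * s)\<bar> = \<bar>sin (pi * \<bar>s\<bar>)\<bar>"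
    by (cases "s \<ge> 0") auto
  then show ?thesis
    using sin_pi_ge_tent[of "\<bar>s\<bar>"] assms by (auto simp: min_def split: if_splits)
qed

lemma norm_cis_diff: "cmod (cis x - cis y) = 2 * \<bar>sin ((x - y) / 2)\<bar>"
proof -
  have half: "2 * ((x - y) / 2) = x - y" by simp
  have "(cmod (cis x - cis y))\<^sup>2 = 2 - 2 * cos (x - y)"
    by (simp add: cmod_power2 power2_diff cos_diff algebra_simps)
  also have "\<dots> = (2 * \<bar>sin ((x - y) / 2)\<bar>)\<^sup>2"
    using cos_double_sin[of "(x - y) / 2", unfolded half] by (simp add: power_mult_distrib)
  finally show ?thesis
    by (rule power2_eq_imp_eq) auto
qed

lemma measure_circle_haar:
  assumes "C \<in> sets borel"
  shows "measure circle_haar C = measure lborel ((\<lambda>t. cis (2 * pi * t)) -` C \<inter> {0..1})"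
proof -
  have "continuous_on UNIV (\<lambda>t. cis (2 * pi * t))"
    by (intro continuous_intros)
  then have "(\<lambda>t. cis (2 * pi * t)) \<in> measurable (restrict_space lborel {0..1}) borel"
    by (intro measurable_restrict_space1) (simp add: borel_measurable_continuous_onI)
  then have "measure circle_haar C =
      measure (restrict_space lborel {0..1}) ((\<lambda>t. cis (2 * pi * t)) -` C \<inter> {0..1})"
    unfolding circle_haar_def using assms by (subst measure_distr) auto
  also have "\<dots> = measure lborel ((\<lambda>t. cis (2 * pi * t)) -` C \<inter> {0..1})"
    by (rule measure_restrict_space) auto
  finally show ?thesis .
qed

lemma measure_circle_haar_cball_le:
  fixes a :: complex and r :: real
  assumes "0 \<le> r"
  shows "measure circle_haar (cball a r) \<le> 2 * r"
proof -
  define S where "S = (\<lambda>t. cis (2 * pi * t)) -` cball a r \<inter> {0..1}"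
  have "measure lborel S \<le> 2 * r"
  proof (cases "S = {}")
    case True
    then show ?thesis using assms by simp
  next
    case False
    then obtain t0 where t0: "t0 \<in> S" by blast
    have "S \<subseteq> {t0 - r/2 .. t0 + r/2} \<union> {0 .. r/2} \<union> {1 - r/2 .. 1}"
    proof
      fix t assume t: "t \<in> S"
      have half: "(2 * pi * t - 2 * pi * t0) / 2 = pi * (t - t0)"
        by (simp add: field_simps)
      have "2 * \<bar>sin (pi * (t - t0))\<bar> = dist (cis (2 * pi * t)) (cis (2 * pi * t0))"
        by (simp add: dist_norm norm_cis_diff half)
      also have "\<dots> \<le> 2 * r"
        using dist_triangle3[of "cis (2 * pi * t)" "cis (2 * pi * t0)" a] t t0 by (simp add: S_def)
      finally have "\<bar>t - t0\<bar> \<le> r / 2 \<or> 1 - r / 2 \<le> \<bar>t - t0\<bar>"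
        using t t0 by (intro abs_sin_pi_le_imp_near_0_or_1) (auto simp: S_def)
      then show "t \<in> {t0 - r/2 .. t0 + r/2} \<union> {0 .. r/2} \<union> {1 - r/2 .. 1}"
        using t t0 by (auto simp: S_def; arith)
    qed
    moreover have "closed S"
      unfolding S_def by (intro closed_Int continuous_closed_vimage continuous_intros) auto
    ultimately have "measure lborel S \<le>
        measure lborel ({t0 - r/2 .. t0 + r/2} \<union> {0 .. r/2} \<union> {1 - r/2 .. 1})"
      by (intro measure_mono_fmeasurable) (auto intro!: fmeasurable_compact compact_Un)
    also have "\<dots> \<le> measure lborel {t0 - r/2 .. t0 + r/2} + measure lborel {0 .. r/2}
        + measure lborel {1 - r/2 .. 1}"
      by (intro order_trans[OF measure_Un_le] add_right_mono measure_Un_le) auto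
    also have "\<dots> = 2 * r" using assms by simp
    finally show ?thesis .
  qed
  then show ?thesis
    by (simp add: measure_circle_haar S_def)
qed

theorem lemma2p2:
  fixes a :: complex and lam :: real
  assumes "lam \<ge> 0"
  shows "spectral_density (\<lambda>z. z - a) lam \<le> 8 * sqrt 3 / sqrt 47 * lam"
proof -
  have "space circle_haar = UNIV"
    by (simp add: circle_haar_def)
  then have "spectral_density (\<lambda>z. z - a) lam = measure circle_haar (cball a lam)"
    by (simp add: spectral_density_def cball_def dist_norm norm_minus_commute)
  also have "\<dots> \<le> 2 * lam"
    using assms by (rule measure_circle_haar_cball_le)
  also have "\<dots> \<le> 8 * sqrt 3 / sqrt 47 * lam"
  proof -
    have "2 * sqrt 47 = sqrt 188" and "8 * sqrt 3 = sqrt 192"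
      using real_sqrt_mult[of 4 47] real_sqrt_mult[of 64 3] by simp_all
    then have "2 \<le> 8 * sqrt 3 / sqrt 47"
      by (simp add: field_simps)
    then show ?thesis
      using assms by (rule mult_right_mono)
  qed
  finally show ?thesis .
qed

end
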